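(* For any two distinct triples $(p,m,r)\ne(p',m',r')$ in $\mathcal{TP}_n=\{(p,m,r)\in\mathbb{Z}_{\ge0}^3 : 2p+m+r=n\}$, neither of $\mathscr{Z}_{p,m,r}$ and $\mathscr{Z}_{p',m',r'}$ is contained in the other.
   Context: $\mathscr{Z}_n=\{(A,B)\in M_n(\mathbb{C})^2 : AB+BA=0\}$ with $GL_n(\mathbb{C})$ acting by simultaneous conjugation. $\mathscr{Z}_{p,m,r}$ is the Zariski closure in $\mathscr{Z}_n$ of the union of the $GL_n$-orbits of all pairs $(A,B)\in\mathscr{Z}_n$ with $A=\mathrm{diag}(a_1,-a_1,\dots,a_p,-a_p,a_{p+1},\dots,a_{p+m},0,\dots,0)$ ($r$ zeros), where $a_i\in\mathbb{C}^*$ and $a_i\ne\pm a_j$ for $i\ne j$. *)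

theory Defs
  imports "HOL-Analysis.Analysis"
begin

type_synonym 'n cmat = "complex ^ 'n ^ 'n"

definition anticomm_pairs :: "('n::finite cmat \<times> 'n cmat) set" where
  "anticomm_pairs = {(A, B). A ** B + B ** A = 0}"

inductive_set poly_fun :: "('n::finite cmat \<times> 'n cmat \<Rightarrow> complex) set" where
  const: "(\<lambda>_. c) \<in> poly_fun"
| coordA: "(\<lambda>(A, B). A $ i $ j) \<in> poly_fun"
| coordB: "(\<lambda>(A, B). B $ i $ j) \<in> poly_fun"
| add: "f \<in> poly_fun \<Longrightarrow> g \<in> poly_fun \<Longrightarrow> (\<lambda>x. f x + g x) \<in> poly_fun"
| mult: "f \<in> poly_fun \<Longrightarrow> g \<in> poly_fun \<Longrightarrow> (\<lambda>x. f x * g x) \<in> poly_fun"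

definition zariski_closed :: "('n::finite cmat \<times> 'n cmat) set \<Rightarrow> bool" where
  "zariski_closed X \<longleftrightarrow> (\<exists>F. F \<subseteq> poly_fun \<and> X = {x. \<forall>f\<in>F. f x = 0})"

definition zariski_closure_in_Z :: "('n::finite cmat \<times> 'n cmat) set \<Rightarrow> ('n cmat \<times> 'n cmat) set" where
  "zariski_closure_in_Z S = anticomm_pairs \<inter> \<Inter>{C. zariski_closed C \<and> S \<subseteq> C}"

definition conj_pair :: "'n::finite cmat \<Rightarrow> 'n cmat \<times> 'n cmat \<Rightarrow> 'n cmat \<times> 'n cmat" where
  "conj_pair g x = (g ** fst x ** matrix_inv g, g ** snd x ** matrix_inv g)"

definition GL_orbit :: "'n::finite cmat \<times> 'n cmat \<Rightarrow> ('n cmat \<times> 'n cmat) set" where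
  "GL_orbit x = {conj_pair g x | g. invertible g}"

text \<open>The k-th (0-based) diagonal entry of
  diag(a_1,-a_1,...,a_p,-a_p,a_{p+1},...,a_{p+m},0,...,0), with a_{i+1} written a i.\<close>
definition diag_entry :: "nat \<Rightarrow> nat \<Rightarrow> (nat \<Rightarrow> complex) \<Rightarrow> nat \<Rightarrow> complex" where
  "diag_entry p m a k =
     (if k < 2 * p then (if even k then a (k div 2) else - a (k div 2))
      else if k < 2 * p + m then a (k - p) else 0)"

definition admissible :: "nat \<Rightarrow> nat \<Rightarrow> (nat \<Rightarrow> complex) \<Rightarrow> bool" where
  "admissible p m a \<longleftrightarrow> (\<forall>i < p + m. a i \<noteq> 0) \<and>
     (\<forall>i < p + m. \<forall>j < p + m. i \<noteq> j \<longrightarrow> a i \<noteq> a j \<and> a i \<noteq> - a j)"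

text \<open>The diagonal matrices of type (p,m,r), with respect to an enumeration
  idx of the index type by {0..<n} (any enumeration: the union of orbits does not depend on it).\<close>
definition type_diag :: "nat \<Rightarrow> nat \<Rightarrow> nat \<Rightarrow> 'n::finite cmat set" where
  "type_diag p m r = {D. 2 * p + m + r = CARD('n) \<and>
     (\<exists>idx a. bij_betw idx (UNIV :: 'n set) {..<CARD('n)} \<and> admissible p m a \<and>
        (\<forall>i j. D $ i $ j = (if i = j then diag_entry p m a (idx i) else 0)))}"

definition Zpmr :: "nat \<Rightarrow> nat \<Rightarrow> nat \<Rightarrow> ('n::finite cmat \<times> 'n cmat) set" where
  "Zpmr p m r = zariski_closure_in_Z
     (\<Union>{GL_orbit (A, B) | A B. (A, B) \<in> anticomm_pairs \<and> A \<in> type_diag p m r})"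

definition TP :: "nat \<Rightarrow> (nat \<times> nat \<times> nat) set" where
  "TP n = {(p, m, r). 2 * p + m + r = n}"

end

theory Submission
  imports Defs "Jordan_Normal_Form.Schur_Decomposition"
begin

text \<open>
  If (p,m,r) and (p',m',r') differ, then m' < m, r < r', p' < p or r' < r. Accordingly let u_k(A,B)
  be tr A^(2k+1), tr A^(k+1), tr (B^2 A^(2k+2)) or tr B^(2k+1), and N be m, 2p+m, p or r; each u_k
  is a conjugation invariant polynomial. For A diagonal of type (p',m',r') and B anticommuting
  with A, the sequence (u_k) is a sum of fewer than N geometric sequences: the pairs +-a_i cancel
  in odd powers of A, B^2 has zero diagonal entries at the unpaired eigenvalues of A, and odd
  powers of B only see the r' x r' block of B on ker A, whose power traces are power sums of its
  eigenvalues. So the N x N Hankel determinant of (u_k) vanishes on the orbits of type (p',m',r'),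
  hence on their closure. At an explicit point of Z_{p,m,r} the sequence is a sum of N geometric
  sequences with distinct ratios and nonzero weights, where that determinant is nonzero.
\<close>

section \<open>Hankel determinants of sums of geometric sequences\<close>

definition sum_of_geometric :: "nat \<Rightarrow> (nat \<Rightarrow> 'a::comm_semiring_1) \<Rightarrow> bool" where
  "sum_of_geometric s w \<longleftrightarrow> (\<exists>c x. \<forall>k. w k = (\<Sum>l<s. c l * x l ^ k))"

lemma sum_of_geometric_mono:
  assumes "sum_of_geometric s w" "s \<le> t"
  shows "sum_of_geometric t w"
proof -
  obtain c x where w: "\<forall>k. w k = (\<Sum>l<s. c l * x l ^ k)"
    using assms(1) unfolding sum_of_geometric_def by blast
  define c' where "c' l = (if l < s then c l else 0)" for l
  have "(\<Sum>l<t. c' l * x l ^ k) = (\<Sum>l<s. c l * x l ^ k)" for k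
    using assms(2) by (intro sum.mono_neutral_cong_right) (auto simp: c'_def)
  with w show ?thesis unfolding sum_of_geometric_def by metis
qed

lemma poly_eq_sum_coeff_lessThan:
  fixes p :: "'a::comm_semiring_1 poly"
  assumes "degree p < N"
  shows "poly p x = (\<Sum>j<N. coeff p j * x ^ j)"
  unfolding poly_altdef using assms by (intro sum.mono_neutral_left) (auto simp: coeff_eq_0)

lemma vandermonde_system_trivial:
  fixes x z :: "nat \<Rightarrow> 'a::idom"
  assumes inj: "inj_on x {..<N}" and z: "\<forall>i<N. (\<Sum>l<N. z l * x l ^ i) = 0" and m: "m < N"
  shows "z m = 0"
proof -
  define L where "L = (\<Prod>l\<in>{..<N}-{m}. [:- x l, 1:])"
  have "degree L < N"
    unfolding L_def using m by (subst degree_prod_eq_sum_degree) auto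
  note L_sum = poly_eq_sum_coeff_lessThan[OF this]
  have "0 = (\<Sum>i<N. coeff L i * (\<Sum>l<N. z l * x l ^ i))" using z by simp
  also have "\<dots> = (\<Sum>l<N. z l * poly L (x l))"
    by (simp add: L_sum sum_distrib_left sum_distrib_right mult_ac) (rule sum.swap)
  also have "\<dots> = z m * poly L (x m)"
    using m by (subst sum.mono_neutral_right[of "{..<N}" "{m}"]) (auto simp: L_def poly_prod)
  finally have "z m * poly L (x m) = 0" by simp
  moreover have "poly L (x m) \<noteq> 0"
    unfolding L_def poly_prod using inj m by (auto simp: inj_on_def)
  ultimately show "z m = 0" by simp
qed

definition hankel_mat :: "nat \<Rightarrow> (nat \<Rightarrow> 'a) \<Rightarrow> 'a mat" where
  "hankel_mat N w = Matrix.mat N N (\<lambda>(i, j). w (i + j))"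

lemma hankel_mat_carrier [simp]: "hankel_mat N w \<in> carrier_mat N N"
  by (simp add: hankel_mat_def)

lemma hankel_mat_mult_coeffs:
  fixes P :: "'a::comm_ring_1 poly"
  assumes w: "\<forall>k. w k = (\<Sum>l<s. c l * x l ^ k)" and deg: "degree P < N" and i: "i < N"
  shows "(hankel_mat N w *\<^sub>v Matrix.vec N (coeff P)) $ i = (\<Sum>l<s. (c l * poly P (x l)) * x l ^ i)"
proof -
  have "(hankel_mat N w *\<^sub>v Matrix.vec N (coeff P)) $ i = (\<Sum>j<N. w (i + j) * coeff P j)"
    using i by (simp add: hankel_mat_def scalar_prod_def atLeast0LessThan)
  also have "\<dots> = (\<Sum>j<N. \<Sum>l<s. c l * x l ^ i * (coeff P j * x l ^ j))"
    by (simp add: w sum_distrib_left sum_distrib_right power_add mult_ac)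
  also have "\<dots> = (\<Sum>l<s. c l * x l ^ i * poly P (x l))"
    by (simp add: poly_eq_sum_coeff_lessThan[OF deg] sum_distrib_left) (rule sum.swap)
  also have "\<dots> = (\<Sum>l<s. (c l * poly P (x l)) * x l ^ i)"
    by (intro sum.cong refl) (simp only: mult.assoc mult.commute[of "x l ^ i" for l])
  finally show ?thesis .
qed

lemma det_hankel_mat_eq_0:
  fixes w :: "nat \<Rightarrow> 'a::idom"
  assumes "sum_of_geometric s w" "s < N"
  shows "det (hankel_mat N w) = 0"
proof -
  obtain c x where w: "\<forall>k. w k = (\<Sum>l<s. c l * x l ^ k)"
    using assms(1) unfolding sum_of_geometric_def by blast
  define q where "q = (\<Prod>l<s. [:- x l, 1:])"
  have "monic q" unfolding q_def by (intro monic_prod) auto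
  moreover have deg: "degree q = s"
    unfolding q_def by (subst degree_prod_eq_sum_degree) auto
  ultimately have "Matrix.vec N (coeff q) \<noteq> 0\<^sub>v N"
    using assms(2) by (metis index_vec index_zero_vec(1) one_neq_zero)
  moreover have "poly q (x l) = 0" if "l < s" for l
    using that by (auto simp: q_def poly_prod prod_zero_iff)
  then have "hankel_mat N w *\<^sub>v Matrix.vec N (coeff q) = 0\<^sub>v N"
    using hankel_mat_mult_coeffs[OF w] deg assms(2)
    by (intro eq_vecI) (simp_all add: hankel_mat_def)
  ultimately show ?thesis
    by (subst det_0_iff_vec_prod_zero[OF hankel_mat_carrier]) (blast intro: vec_carrier)
qed

lemma hankel_mat_kernel_poly_eq_0:
  fixes w :: "nat \<Rightarrow> 'a::idom"
  assumes w: "\<forall>k. w k = (\<Sum>l<N. c l * x l ^ k)" and inj: "inj_on x {..<N}"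
    and c: "\<forall>l<N. c l \<noteq> 0" and deg: "degree P < N"
    and kernel: "hankel_mat N w *\<^sub>v Matrix.vec N (coeff P) = 0\<^sub>v N"
  shows "P = 0"
proof (rule ccontr)
  assume "P \<noteq> 0"
  have "(\<Sum>l<N. (c l * poly P (x l)) * x l ^ i) = 0" if "i < N" for i
    using hankel_mat_mult_coeffs[OF w deg that] kernel that by simp
  then have "c l * poly P (x l) = 0" if "l < N" for l
    using vandermonde_system_trivial[OF inj _ that, of "\<lambda>l. c l * poly P (x l)"] by blast
  with c have roots: "x ` {..<N} \<subseteq> {y. poly P y = 0}" by auto
  have "N = card (x ` {..<N})" using card_image[OF inj] by simp
  also have "\<dots> \<le> card {y. poly P y = 0}"
    by (rule card_mono[OF poly_roots_finite[OF \<open>P \<noteq> 0\<close>] roots])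
  also have "\<dots> \<le> degree P" by (rule card_poly_roots_bound[OF \<open>P \<noteq> 0\<close>])
  finally show False using deg by simp
qed

lemma det_hankel_mat_neq_0:
  fixes w :: "nat \<Rightarrow> 'a::idom"
  assumes w: "\<forall>k. w k = (\<Sum>l<N. c l * x l ^ k)" and inj: "inj_on x {..<N}"
    and c: "\<forall>l<N. c l \<noteq> 0"
  shows "det (hankel_mat N w) \<noteq> 0"
proof
  assume "det (hankel_mat N w) = 0"
  then obtain v where v: "v \<in> carrier_vec N" "v \<noteq> 0\<^sub>v N" "hankel_mat N w *\<^sub>v v = 0\<^sub>v N"
    using det_0_iff_vec_prod_zero[OF hankel_mat_carrier, THEN iffD1] by blast
  define P where "P = (\<Sum>j<N. monom (v $ j) j)"
  have "N > 0" using v(1,2) by (cases N) auto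
  moreover have "degree P \<le> N - 1"
    unfolding P_def by (intro degree_sum_le) (auto intro: order.trans[OF degree_monom_le])
  ultimately have deg: "degree P < N" by simp
  have v_eq: "v = Matrix.vec N (coeff P)"
    using v(1) by (intro eq_vecI) (auto simp: P_def coeff_sum coeff_monom)
  with v(3) have "P = 0" by (intro hankel_mat_kernel_poly_eq_0[OF w inj c deg]) simp
  then have "v = 0\<^sub>v N" using v(1) v_eq by (intro eq_vecI) auto
  with v(2) show False by contradiction
qed

section \<open>Traces of powers as power sums\<close>

definition mat_trace :: "'a::comm_ring_1 mat \<Rightarrow> 'a" where
  "mat_trace A = (\<Sum>i<dim_row A. A $$ (i, i))"

lemma mat_trace_mult_comm:
  assumes "A \<in> carrier_mat n m" "B \<in> carrier_mat m n"
  shows "mat_trace (A * B) = mat_trace (B * A)"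
proof -
  have "mat_trace (A * B) = (\<Sum>i<n. \<Sum>j<m. A $$ (i, j) * B $$ (j, i))"
    using assms by (simp add: mat_trace_def scalar_prod_def atLeast0LessThan)
  also have "\<dots> = (\<Sum>j<m. \<Sum>i<n. B $$ (j, i) * A $$ (i, j))"
    by (subst sum.swap) (simp add: mult.commute)
  also have "\<dots> = mat_trace (B * A)"
    using assms by (simp add: mat_trace_def scalar_prod_def atLeast0LessThan)
  finally show ?thesis .
qed

lemma upper_triangular_mult:
  assumes "X \<in> carrier_mat n n" "Y \<in> carrier_mat n n" "upper_triangular X" "upper_triangular Y"
  shows "upper_triangular (X * Y)"
proof
  fix i j assume ij: "j < i" "i < dim_row (X * Y)"
  have "X $$ (i, l) * Y $$ (l, j) = 0" if "l < n" for l
  proof (cases "l < i")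
    case True
    then show ?thesis using assms ij upper_triangularD[OF assms(3), of l i] by simp
  next
    case False
    then show ?thesis using assms ij that upper_triangularD[OF assms(4), of j l] by simp
  qed
  then show "(X * Y) $$ (i, j) = 0"
    using assms ij by (simp add: scalar_prod_def)
qed

lemma upper_triangular_mult_diag:
  assumes "X \<in> carrier_mat n n" "Y \<in> carrier_mat n n" "upper_triangular X" "upper_triangular Y"
    and "i < n"
  shows "(X * Y) $$ (i, i) = X $$ (i, i) * Y $$ (i, i)"
proof -
  have "X $$ (i, l) * Y $$ (l, i) = 0" if "l < n" "l \<noteq> i" for l
  proof (cases "l < i")
    case True
    then show ?thesis using assms upper_triangularD[OF assms(3), of l i] by simp
  next
    case False
    then show ?thesis using assms that upper_triangularD[OF assms(4), of i l] by simp
  qed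
  moreover have "(X * Y) $$ (i, i) = (\<Sum>l\<in>{0..<n}. X $$ (i, l) * Y $$ (l, i))"
    using assms by (simp add: scalar_prod_def)
  ultimately show ?thesis
    using assms(5) by (subst (asm) sum.remove[of _ i]) (auto intro!: sum.neutral)
qed

lemma upper_triangular_power:
  assumes "T \<in> carrier_mat n n" "upper_triangular T"
  shows "upper_triangular (T ^\<^sub>m k) \<and> (\<forall>i<n. (T ^\<^sub>m k) $$ (i, i) = T $$ (i, i) ^ k)"
proof (induction k)
  case (Suc k)
  have Tk: "T ^\<^sub>m k \<in> carrier_mat n n" using assms(1) by simp
  have "upper_triangular (T ^\<^sub>m Suc k)"
    using upper_triangular_mult[OF Tk assms(1)] Suc.IH assms(2) by simp
  moreover have "(T ^\<^sub>m Suc k) $$ (i, i) = T $$ (i, i) ^ Suc k" if "i < n" for i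
  proof -
    have "(T ^\<^sub>m Suc k) $$ (i, i) = (T ^\<^sub>m k) $$ (i, i) * T $$ (i, i)"
      unfolding pow_mat.simps using Suc.IH assms(2)
      by (intro upper_triangular_mult_diag[OF Tk assms(1)] that) auto
    with Suc.IH that show ?thesis by (simp add: power_commutes)
  qed
  ultimately show ?case by blast
qed (use assms in auto)

lemma mat_trace_power_eq_power_sum:
  fixes A :: "complex mat"
  assumes A: "A \<in> carrier_mat n n"
  shows "\<exists>ev. \<forall>k. mat_trace (A ^\<^sub>m k) = (\<Sum>l<n. ev l ^ k)"
proof -
  obtain as where "char_poly A = (\<Prod>a\<leftarrow>as. [:- a, 1:])"
    using char_poly_factorized[OF A] by blast
  from schur_decomposition_exists[OF A this] obtain T where
    T: "T \<in> carrier_mat n n" "upper_triangular T" "similar_mat A T" by blast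
  then obtain P Q where PQ: "similar_mat_wit A T P Q" unfolding similar_mat_def by blast
  then have PQ_carrier: "P \<in> carrier_mat n n" "Q \<in> carrier_mat n n" and "Q * P = 1\<^sub>m n"
    using A unfolding similar_mat_wit_def Let_def by auto
  have "mat_trace (A ^\<^sub>m k) = (\<Sum>l<n. (T $$ (l, l)) ^ k)" for k
  proof -
    have Tk: "T ^\<^sub>m k \<in> carrier_mat n n" using T by simp
    have "mat_trace (A ^\<^sub>m k) = mat_trace ((P * T ^\<^sub>m k) * Q)"
      using similar_mat_wit_pow_id[OF PQ] by simp
    also have "\<dots> = mat_trace (Q * (P * T ^\<^sub>m k))"
      using PQ_carrier Tk by (intro mat_trace_mult_comm) auto
    also have "Q * (P * T ^\<^sub>m k) = T ^\<^sub>m k"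
      using PQ_carrier Tk \<open>Q * P = 1\<^sub>m n\<close>
      by (simp add: assoc_mult_mat[symmetric] left_mult_one_mat[OF Tk])
    also have "mat_trace (T ^\<^sub>m k) = (\<Sum>l<n. (T $$ (l, l)) ^ k)"
      using upper_triangular_power[OF T(1,2)] T(1) by (simp add: mat_trace_def)
    finally show ?thesis .
  qed
  then show ?thesis by (intro exI[of _ "\<lambda>l. T $$ (l, l)"]) simp
qed

fun matpow :: "'a::semiring_1^'n^'n \<Rightarrow> nat \<Rightarrow> 'a^'n^'n" where
  "matpow A 0 = Finite_Cartesian_Product.mat 1"
| "matpow A (Suc k) = matpow A k ** A"

lemma matpow_restrict_support:
  fixes M :: "'a::semiring_1^'n^'n"
  assumes supp: "\<forall>i j. M $ i $ j \<noteq> 0 \<longrightarrow> i \<in> S \<and> j \<in> S" and h: "bij_betw h {0..<s} S"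
    and "a < s" "b < s"
  shows "matpow M k $ h a $ h b = (Matrix.mat s s (\<lambda>(a, b). M $ h a $ h b) ^\<^sub>m k) $$ (a, b)"
  using assms(3,4)
proof (induction k arbitrary: b)
  case 0
  have "h a = h b \<longleftrightarrow> a = b" using h 0 \<open>a < s\<close> by (auto simp: bij_betw_def inj_on_def)
  then show ?case using 0 by (simp add: Finite_Cartesian_Product.mat_def)
next
  case (Suc k)
  let ?J = "Matrix.mat s s (\<lambda>(a, b). M $ h a $ h b)"
  have "matpow M (Suc k) $ h a $ h b = (\<Sum>i\<in>UNIV. matpow M k $ h a $ i * M $ i $ h b)"
    by (simp add: matrix_matrix_mult_def)
  also have "\<dots> = (\<Sum>i\<in>S. matpow M k $ h a $ i * M $ i $ h b)"
  proof (rule sum.mono_neutral_right)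
    show "\<forall>i\<in>UNIV - S. matpow M k $ h a $ i * M $ i $ h b = 0"
      using supp by (metis DiffD2 mult_zero_right)
  qed auto
  also have "\<dots> = (\<Sum>c<s. matpow M k $ h a $ h c * M $ h c $ h b)"
    using sum.reindex_bij_betw[OF h, of "\<lambda>i. matpow M k $ h a $ i * M $ i $ h b"]
    by (simp add: atLeast0LessThan)
  also have "\<dots> = (\<Sum>c<s. (?J ^\<^sub>m k) $$ (a, c) * ?J $$ (c, b))"
    using Suc by simp
  also have "\<dots> = (?J ^\<^sub>m Suc k) $$ (a, b)"
    using Suc.prems by (simp add: scalar_prod_def atLeast0LessThan)
  finally show ?case .
qed

lemma trace_matpow_supported:
  fixes M :: "complex^'n^'n"
  assumes supp: "\<forall>i j. M $ i $ j \<noteq> 0 \<longrightarrow> i \<in> S \<and> j \<in> S"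
  shows "\<exists>ev. \<forall>k>0. trace (matpow M k) = (\<Sum>l<card S. ev l ^ k)"
proof -
  obtain h where h: "bij_betw h {0..<card S} S"
    using ex_bij_betw_nat_finite[of S] by auto
  define J where "J = Matrix.mat (card S) (card S) (\<lambda>(a, b). M $ h a $ h b)"
  obtain ev where ev: "\<forall>k. mat_trace (J ^\<^sub>m k) = (\<Sum>l<card S. ev l ^ k)"
    using mat_trace_power_eq_power_sum[of J "card S"] by (auto simp: J_def)
  have "trace (matpow M k) = (\<Sum>l<card S. ev l ^ k)" if "k > 0" for k
  proof -
    obtain k' where k': "k = Suc k'" using \<open>k > 0\<close> gr0_implies_Suc by blast
    have "trace (matpow M k) = (\<Sum>i\<in>S. matpow M k $ i $ i)"
      unfolding trace_def using supp
      by (intro sum.mono_neutral_right) (auto simp: k' matrix_matrix_mult_def intro!: sum.neutral)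
    also have "\<dots> = (\<Sum>a<card S. matpow M k $ h a $ h a)"
      using sum.reindex_bij_betw[OF h, of "\<lambda>i. matpow M k $ i $ i"] by (simp add: atLeast0LessThan)
    also have "\<dots> = mat_trace (J ^\<^sub>m k)"
      by (simp add: matpow_restrict_support[OF supp h] mat_trace_def J_def)
    finally show ?thesis using ev by simp
  qed
  then show ?thesis by blast
qed

section \<open>Conjugation invariant polynomial functions\<close>

lemma poly_fun_sum:
  assumes "finite I" "\<And>i. i \<in> I \<Longrightarrow> f i \<in> poly_fun"
  shows "(\<lambda>x. \<Sum>i\<in>I. f i x) \<in> poly_fun"
  using assms by (induction I rule: finite_induct) (auto intro: poly_fun.intros)

lemma poly_fun_prod:
  assumes "finite I" "\<And>i. i \<in> I \<Longrightarrow> f i \<in> poly_fun"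
  shows "(\<lambda>x. \<Prod>i\<in>I. f i x) \<in> poly_fun"
  using assms by (induction I rule: finite_induct) (auto intro: poly_fun.intros)

definition poly_mat_fun :: "('n::finite cmat \<times> 'n cmat \<Rightarrow> 'n cmat) \<Rightarrow> bool" where
  "poly_mat_fun F \<longleftrightarrow> (\<forall>i j. (\<lambda>x. F x $ i $ j) \<in> poly_fun)"

lemma poly_mat_fun_fst: "poly_mat_fun fst"
  by (simp add: poly_mat_fun_def poly_fun.coordA[unfolded case_prod_beta'])

lemma poly_mat_fun_snd: "poly_mat_fun snd"
  by (simp add: poly_mat_fun_def poly_fun.coordB[unfolded case_prod_beta'])

lemma poly_mat_fun_mult: "poly_mat_fun F \<Longrightarrow> poly_mat_fun G \<Longrightarrow> poly_mat_fun (\<lambda>x. F x ** G x)"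
  unfolding poly_mat_fun_def matrix_matrix_mult_def by (auto intro!: poly_fun_sum poly_fun.mult)

lemma poly_mat_fun_matpow: "poly_mat_fun F \<Longrightarrow> poly_mat_fun (\<lambda>x. matpow (F x) k)"
proof (induction k)
  case 0
  then show ?case
    unfolding poly_mat_fun_def Finite_Cartesian_Product.mat_def by (auto intro: poly_fun.const)
qed (simp add: poly_mat_fun_mult)

lemma poly_fun_trace: "poly_mat_fun F \<Longrightarrow> (\<lambda>x. trace (F x)) \<in> poly_fun"
  unfolding poly_mat_fun_def trace_def by (auto intro!: poly_fun_sum)

lemma poly_fun_det_hankel_mat:
  assumes "\<And>k. u k \<in> poly_fun"
  shows "(\<lambda>x. det (hankel_mat N (\<lambda>k. u k x))) \<in> poly_fun"
proof -
  have "det (hankel_mat N (\<lambda>k. u k x)) =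
      (\<Sum>\<pi>\<in>{\<pi>. \<pi> permutes {0..<N}}. signof \<pi> * (\<Prod>i\<in>{0..<N}. u (i + \<pi> i) x))" for x
    unfolding det_def'[OF hankel_mat_carrier]
    by (intro sum.cong refl arg_cong2[where f = "(*)"] prod.cong)
      (auto simp: hankel_mat_def permutes_in_image)
  then show ?thesis
    by (simp add: finite_permutations assms poly_fun_sum poly_fun_prod poly_fun.mult poly_fun.const)
qed

definition conj_invariant :: "('n::finite cmat \<times> 'n cmat \<Rightarrow> 'a) \<Rightarrow> bool" where
  "conj_invariant f \<longleftrightarrow> (\<forall>g x. invertible g \<longrightarrow> f (conj_pair g x) = f x)"

lemma invertible_mult_matrix_inv:
  fixes g :: "'a::semiring_1^'n^'n"
  assumes "invertible g"
  shows "g ** matrix_inv g = Finite_Cartesian_Product.mat 1"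
    and "matrix_inv g ** g = Finite_Cartesian_Product.mat 1"
proof -
  obtain g' where
    "g ** g' = Finite_Cartesian_Product.mat 1 \<and> g' ** g = Finite_Cartesian_Product.mat 1"
    using assms unfolding invertible_def by blast
  then have "g ** matrix_inv g = Finite_Cartesian_Product.mat 1 \<and>
      matrix_inv g ** g = Finite_Cartesian_Product.mat 1"
    unfolding matrix_inv_def by (rule someI)
  then show "g ** matrix_inv g = Finite_Cartesian_Product.mat 1"
    and "matrix_inv g ** g = Finite_Cartesian_Product.mat 1" by auto
qed

lemma conj_matrix_mult:
  fixes g :: "'a::semiring_1^'n^'n"
  assumes "invertible g"
  shows "(g ** X ** matrix_inv g) ** (g ** Y ** matrix_inv g) = g ** (X ** Y) ** matrix_inv g"
  using invertible_mult_matrix_inv(2)[OF assms]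
  by (simp add: matrix_mul_assoc) (metis matrix_mul_assoc matrix_mul_lid)

lemma conj_matpow:
  fixes g :: "'a::semiring_1^'n^'n"
  assumes "invertible g"
  shows "matpow (g ** X ** matrix_inv g) k = g ** matpow X k ** matrix_inv g"
  by (induction k)
    (simp_all add: invertible_mult_matrix_inv(1)[OF assms] conj_matrix_mult[OF assms])

lemma trace_conj:
  fixes g :: "'a::comm_semiring_1^'n^'n"
  assumes "invertible g"
  shows "trace (g ** X ** matrix_inv g) = trace X"
  using trace_mul_sym[of "g ** X" "matrix_inv g"] invertible_mult_matrix_inv(2)[OF assms]
  by (simp add: matrix_mul_assoc)

definition trace_odd_pow_fst :: "nat \<Rightarrow> 'n::finite cmat \<times> 'n cmat \<Rightarrow> complex" where
  "trace_odd_pow_fst k x = trace (matpow (fst x) (2 * k + 1))"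

definition trace_pow_fst :: "nat \<Rightarrow> 'n::finite cmat \<times> 'n cmat \<Rightarrow> complex" where
  "trace_pow_fst k x = trace (matpow (fst x) (k + 1))"

definition trace_sq_snd_pow_fst :: "nat \<Rightarrow> 'n::finite cmat \<times> 'n cmat \<Rightarrow> complex" where
  "trace_sq_snd_pow_fst k x = trace (snd x ** snd x ** matpow (fst x) (2 * k + 2))"

definition trace_odd_pow_snd :: "nat \<Rightarrow> 'n::finite cmat \<times> 'n cmat \<Rightarrow> complex" where
  "trace_odd_pow_snd k x = trace (matpow (snd x) (2 * k + 1))"

lemma trace_invariants_poly_fun:
  "trace_odd_pow_fst k \<in> poly_fun" "trace_pow_fst k \<in> poly_fun"
  "trace_sq_snd_pow_fst k \<in> poly_fun" "trace_odd_pow_snd k \<in> poly_fun"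
  unfolding trace_odd_pow_fst_def[abs_def] trace_pow_fst_def[abs_def]
    trace_sq_snd_pow_fst_def[abs_def] trace_odd_pow_snd_def[abs_def]
  by (intro poly_fun_trace poly_mat_fun_mult poly_mat_fun_matpow poly_mat_fun_fst poly_mat_fun_snd)+

lemma trace_invariants_conj_invariant:
  "conj_invariant (trace_odd_pow_fst k)" "conj_invariant (trace_pow_fst k)"
  "conj_invariant (trace_sq_snd_pow_fst k)" "conj_invariant (trace_odd_pow_snd k)"
  by (simp_all add: conj_invariant_def conj_pair_def trace_odd_pow_fst_def trace_pow_fst_def
      trace_sq_snd_pow_fst_def trace_odd_pow_snd_def conj_matpow conj_matrix_mult trace_conj)

section \<open>Separation by a Hankel determinant\<close>

lemma mem_Zpmr:
  fixes A B :: "'n::finite cmat"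
  assumes "(A, B) \<in> anticomm_pairs" "A \<in> type_diag p m r"
  shows "(A, B) \<in> Zpmr p m r"
proof -
  let ?I = "Finite_Cartesian_Product.mat 1 :: 'n cmat"
  have "invertible ?I" unfolding invertible_def by auto
  moreover have "matrix_inv ?I = ?I" using invertible_mult_matrix_inv(1)[OF \<open>invertible ?I\<close>] by simp
  ultimately have "(A, B) \<in> GL_orbit (A, B)"
    unfolding GL_orbit_def conj_pair_def by (auto intro!: exI[of _ ?I])
  with assms show ?thesis
    unfolding Zpmr_def zariski_closure_in_Z_def by blast
qed

lemma Zpmr_vanishing:
  fixes f :: "'n::finite cmat \<times> 'n cmat \<Rightarrow> complex"
  assumes f: "f \<in> poly_fun" "conj_invariant f"
    and vanish: "\<And>A B. (A, B) \<in> anticomm_pairs \<Longrightarrow> A \<in> type_diag p m r \<Longrightarrow> f (A, B) = 0"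
    and x: "x \<in> Zpmr p m r"
  shows "f x = 0"
proof -
  define C where "C = {x. \<forall>h\<in>{f}. h x = 0}"
  have "zariski_closed C" unfolding zariski_closed_def C_def using f(1) by blast
  moreover have "\<Union>{GL_orbit (A, B) | A B. (A, B) \<in> anticomm_pairs \<and> A \<in> type_diag p m r} \<subseteq> C"
    using vanish f(2) by (auto simp: GL_orbit_def C_def conj_invariant_def)
  ultimately have "Zpmr p m r \<subseteq> C"
    unfolding Zpmr_def zariski_closure_in_Z_def by blast
  with x show ?thesis by (auto simp: C_def)
qed

lemma Zpmr_not_subset_by_hankel:
  fixes u :: "nat \<Rightarrow> 'n::finite cmat \<times> 'n cmat \<Rightarrow> complex"
  assumes u: "\<And>k. u k \<in> poly_fun" "\<And>k. conj_invariant (u k)"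
    and short: "\<And>A B. (A, B) \<in> anticomm_pairs \<Longrightarrow> A \<in> type_diag p' m' r' \<Longrightarrow>
      sum_of_geometric s (\<lambda>k. u k (A, B))"
    and "s < N"
    and x: "x \<in> Zpmr p m r" and long: "\<forall>k. u k x = (\<Sum>l<N. c l * y l ^ k)"
    and inj: "inj_on y {..<N}" and nonzero: "\<forall>l<N. c l \<noteq> 0"
  shows "\<not> (Zpmr p m r :: ('n cmat \<times> 'n cmat) set) \<subseteq> Zpmr p' m' r'"
proof
  assume "(Zpmr p m r :: ('n cmat \<times> 'n cmat) set) \<subseteq> Zpmr p' m' r'"
  with x have x': "x \<in> Zpmr p' m' r'" by blast
  define f where "f x = det (hankel_mat N (\<lambda>k. u k x))" for x
  have "f \<in> poly_fun" unfolding f_def using poly_fun_det_hankel_mat[OF u(1)] .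
  moreover have "conj_invariant f" using u(2) by (simp add: f_def conj_invariant_def)
  moreover have "f (A, B) = 0" if "(A, B) \<in> anticomm_pairs" "A \<in> type_diag p' m' r'" for A B
    unfolding f_def using det_hankel_mat_eq_0[OF short[OF that] \<open>s < N\<close>] .
  ultimately have "f x = 0" by (rule Zpmr_vanishing[OF _ _ _ x'])
  moreover have "f x \<noteq> 0"
    unfolding f_def using det_hankel_mat_neq_0[OF long inj nonzero] .
  ultimately show False by contradiction
qed

section \<open>Diagonal matrices of type (p, m, r) and anticommuting partners\<close>

definition diagonal :: "('n::finite \<Rightarrow> 'a::zero) \<Rightarrow> 'a^'n^'n" where
  "diagonal d = (\<chi> i j. if i = j then d i else 0)"

lemma diagonal_mult_left:
  fixes d :: "'n::finite \<Rightarrow> 'a::semiring_1"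
  shows "(diagonal d ** X) $ i $ j = d i * X $ i $ j"
  unfolding diagonal_def matrix_matrix_mult_def
  by (auto simp: if_distrib if_distribR sum.delta'[OF finite] cong: if_cong)

lemma diagonal_mult_right:
  fixes d :: "'n::finite \<Rightarrow> 'a::semiring_1"
  shows "(X ** diagonal d) $ i $ j = X $ i $ j * d j"
  unfolding diagonal_def matrix_matrix_mult_def
  by (auto simp: if_distrib if_distribR sum.delta[OF finite] cong: if_cong)

lemma matpow_diagonal: "matpow (diagonal d) k = diagonal (\<lambda>i. d i ^ k)"
proof (induction k)
  case 0
  then show ?case by (simp add: diagonal_def Finite_Cartesian_Product.mat_def)
next
  case (Suc k)
  then show ?case
    by (simp add: Finite_Cartesian_Product.vec_eq_iff diagonal_mult_right)
      (simp add: diagonal_def power_commutes)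
qed

lemma trace_mult_diagonal: "trace (X ** diagonal d) = (\<Sum>i\<in>UNIV. X $ i $ i * d i)"
  by (simp add: trace_def diagonal_mult_right)

lemma trace_diagonal: "trace (diagonal d) = (\<Sum>i\<in>UNIV. d i)"
  by (simp add: trace_def diagonal_def)

lemma anticomm_pairs_diagonal_iff:
  "(diagonal d, B) \<in> anticomm_pairs \<longleftrightarrow> (\<forall>i j. (d i + d j) * B $ i $ j = 0)"
  by (simp add: anticomm_pairs_def Finite_Cartesian_Product.vec_eq_iff diagonal_mult_left
      diagonal_mult_right algebra_simps)

definition kernel_block :: "('n::finite \<Rightarrow> complex) \<Rightarrow> 'n cmat \<Rightarrow> 'n cmat" where
  "kernel_block d B = (\<chi> i j. if d i = 0 \<and> d j = 0 then B $ i $ j else 0)"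

context
  fixes d :: "'n::finite \<Rightarrow> complex" and B :: "'n cmat"
  assumes anticomm: "\<forall>i j. (d i + d j) * B $ i $ j = 0"
begin

lemma diagonal_mult_matpow_anticomm:
  fixes i j :: 'n
  shows "d i * matpow B k $ i $ j = (-1) ^ k * matpow B k $ i $ j * d j"
proof (induction k arbitrary: j)
  case 0
  then show ?case by (simp add: Finite_Cartesian_Product.mat_def)
next
  case (Suc k)
  have swap: "d l * B $ l $ j = - (B $ l $ j * d j)" for l
    using anticomm[rule_format, of l j] by (simp add: algebra_simps eq_neg_iff_add_eq_0)
  have "d i * matpow B (Suc k) $ i $ j = (\<Sum>l\<in>UNIV. (d i * matpow B k $ i $ l) * B $ l $ j)"
    by (simp add: matrix_matrix_mult_def sum_distrib_left mult.assoc)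
  also have "\<dots> = (\<Sum>l\<in>UNIV. (-1) ^ Suc k * (matpow B k $ i $ l * B $ l $ j) * d j)"
    by (simp add: Suc mult.assoc swap)
  also have "\<dots> = (-1) ^ Suc k * matpow B (Suc k) $ i $ j * d j"
    by (simp add: matrix_matrix_mult_def sum_distrib_left sum_distrib_right)
  finally show ?case .
qed

lemma matpow_odd_diag_eq_0:
  fixes i :: 'n
  assumes "d i \<noteq> 0"
  shows "matpow B (2 * k + 1) $ i $ i = 0"
proof -
  have "d i * matpow B (2 * k + 1) $ i $ i = - (d i * matpow B (2 * k + 1) $ i $ i)"
    using diagonal_mult_matpow_anticomm[of i "2 * k + 1" i] by (simp add: mult.commute)
  with assms show ?thesis by simp
qed

lemma matpow_kernel_block_row:
  fixes i l :: 'n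
  assumes "d i = 0" "matpow (kernel_block d B) k $ i $ l \<noteq> 0"
  shows "d l = 0"
proof (cases k)
  case 0
  with assms show ?thesis by (auto simp: Finite_Cartesian_Product.mat_def split: if_splits)
next
  case (Suc k')
  with assms(2) obtain c where "kernel_block d B $ c $ l \<noteq> 0"
    by (auto simp: matrix_matrix_mult_def elim!: sum.not_neutral_contains_not_neutral)
  then show ?thesis by (simp add: kernel_block_def split: if_splits)
qed

lemma matpow_kernel_block_eq:
  fixes i j :: 'n
  assumes "d i = 0"
  shows "matpow B k $ i $ j = matpow (kernel_block d B) k $ i $ j"
proof (induction k arbitrary: j)
  case (Suc k)
  have step: "matpow (kernel_block d B) k $ i $ l * B $ l $ j =
      matpow (kernel_block d B) k $ i $ l * kernel_block d B $ l $ j" for l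
  proof (cases "matpow (kernel_block d B) k $ i $ l = 0")
    case False
    then have "d l = 0" using matpow_kernel_block_row[OF assms] by blast
    then show ?thesis using anticomm[rule_format, of l j] by (auto simp: kernel_block_def)
  qed simp
  have "matpow B (Suc k) $ i $ j = (\<Sum>l\<in>UNIV. matpow (kernel_block d B) k $ i $ l * B $ l $ j)"
    using Suc by (simp add: matrix_matrix_mult_def)
  also have "\<dots> = matpow (kernel_block d B) (Suc k) $ i $ j"
    unfolding sum.cong[OF refl step] by (simp add: matrix_matrix_mult_def)
  finally show ?case .
qed simp

end

lemma trace_odd_matpow_kernel_block:
  assumes "(diagonal d, B) \<in> anticomm_pairs"
  shows "trace (matpow B (2 * k + 1)) = trace (matpow (kernel_block d B) (2 * k + 1))"
proof -
  have anticomm: "\<forall>i j. (d i + d j) * B $ i $ j = 0"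
    using assms by (simp add: anticomm_pairs_diagonal_iff)
  have "matpow B (2 * k + 1) $ i $ i = matpow (kernel_block d B) (2 * k + 1) $ i $ i" for i
  proof (cases "d i = 0")
    case True
    then show ?thesis by (rule matpow_kernel_block_eq[OF anticomm])
  next
    case False
    then have "matpow (kernel_block d B) (2 * k + 1) $ i $ i = 0"
      by (simp add: matrix_matrix_mult_def kernel_block_def)
    with matpow_odd_diag_eq_0[OF anticomm False] show ?thesis by simp
  qed
  then show ?thesis by (simp add: trace_def)
qed

lemma sum_lessThan_add:
  fixes F :: "nat \<Rightarrow> 'a::comm_monoid_add"
  shows "(\<Sum>t<a + b. F t) = (\<Sum>t<a. F t) + (\<Sum>j<b. F (a + j))"
  by (induction b) (simp_all add: add.assoc)

lemma sum_lessThan_double: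
  fixes F :: "nat \<Rightarrow> 'a::comm_monoid_add"
  shows "(\<Sum>t<2 * p. F t) = (\<Sum>q<p. F (2 * q) + F (2 * q + 1))"
  by (induction p) (simp_all add: add.assoc)

lemma sum_reindex_type_split:
  fixes F :: "nat \<Rightarrow> 'a::comm_monoid_add"
  assumes bij: "bij_betw idx (UNIV :: 'n::finite set) {..<CARD('n)}"
    and card: "2 * p + m + r = CARD('n)"
  shows "(\<Sum>i\<in>UNIV. F (idx i)) =
    (\<Sum>q<p. F (2 * q) + F (2 * q + 1)) + (\<Sum>j<m. F (2 * p + j)) + (\<Sum>j<r. F (2 * p + m + j))"
proof -
  have "(\<Sum>i\<in>UNIV. F (idx i)) = (\<Sum>t<2 * p + m + r. F t)"
    using sum.reindex_bij_betw[OF bij, of F] card by simp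
  then show ?thesis by (simp only: sum_lessThan_add sum_lessThan_double)
qed

lemma type_diagE:
  assumes "A \<in> type_diag p m r"
  obtains idx a where "bij_betw idx (UNIV :: 'n::finite set) {..<CARD('n)}"
    "2 * p + m + r = CARD('n)" "admissible p m a" "A = diagonal (\<lambda>i. diag_entry p m a (idx i))"
  using assms unfolding type_diag_def diagonal_def
  by (auto simp: Finite_Cartesian_Product.vec_eq_iff)

lemma type_diagI:
  assumes "bij_betw idx (UNIV :: 'n::finite set) {..<CARD('n)}"
    "2 * p + m + r = CARD('n)" "admissible p m a"
  shows "diagonal (\<lambda>i. diag_entry p m a (idx i)) \<in> type_diag p m r"
  using assms unfolding type_diag_def diagonal_def by auto

lemma diag_entry_pair:
  assumes "q < p"
  shows "diag_entry p m a (2 * q) = a q" "diag_entry p m a (Suc (2 * q)) = - a q"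
  using assms by (auto simp: diag_entry_def)

lemma diag_entry_single: "j < m \<Longrightarrow> diag_entry p m a (2 * p + j) = a (p + j)"
  by (simp add: diag_entry_def)

lemma diag_entry_eq_0_iff:
  assumes "admissible p m a"
  shows "diag_entry p m a t = 0 \<longleftrightarrow> 2 * p + m \<le> t"
  using assms by (auto simp: diag_entry_def admissible_def)

lemma admissible_neq_neg:
  fixes a :: "nat \<Rightarrow> complex"
  assumes "admissible p m a" "i < p + m" "j < p + m"
  shows "a i \<noteq> - a j"
  using assms by (cases "i = j") (auto simp: admissible_def add_eq_0_iff2[symmetric])

lemma admissible_eq_iff:
  assumes "admissible p m a" "i < p + m" "j < p + m"
  shows "a i = a j \<longleftrightarrow> i = j"
  using assms by (auto simp: admissible_def)

lemma diag_entry_cases: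
  assumes "t < 2 * p + m"
  obtains (even) "t < 2 * p" "even t" "diag_entry p m a t = a (t div 2)" "t div 2 < p"
  | (odd) "t < 2 * p" "odd t" "diag_entry p m a t = - a (t div 2)" "t div 2 < p"
  | (single) "2 * p \<le> t" "diag_entry p m a t = a (t - p)" "t - p < p + m"
  using assms by (cases "t < 2 * p"; cases "even t") (auto simp: diag_entry_def)

lemma diag_entry_neq_neg_single:
  fixes a :: "nat \<Rightarrow> complex"
  assumes adm: "admissible p m a" and j: "j < m"
  shows "diag_entry p m a t \<noteq> - a (p + j)"
proof
  assume eq: "diag_entry p m a t = - a (p + j)"
  have "a (p + j) \<noteq> 0" using adm j by (simp add: admissible_def)
  with eq adm have "t < 2 * p + m" by (metis diag_entry_eq_0_iff neg_equal_0_iff_equal not_less)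
  then show False
  proof (cases rule: diag_entry_cases[where a = a])
    case even
    with eq admissible_neq_neg[OF adm, of "t div 2" "p + j"] j show False by simp
  next
    case odd
    with eq admissible_eq_iff[OF adm, of "t div 2" "p + j"] j show False by simp
  next
    case single
    with eq admissible_neq_neg[OF adm, of "t - p" "p + j"] j show False by simp
  qed
qed

lemma inj_on_diag_entry:
  fixes a :: "nat \<Rightarrow> complex"
  assumes adm: "admissible p m a"
  shows "inj_on (diag_entry p m a) {..<2 * p + m}"
proof (rule inj_onI)
  fix s t assume "s \<in> {..<2 * p + m}" "t \<in> {..<2 * p + m}"
    and eq: "diag_entry p m a s = diag_entry p m a t"
  then have st: "s < 2 * p + m" "t < 2 * p + m" by simp_all
  define idx where "idx t = (if t < 2 * p then t div 2 else t - p)" for t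
  define pos where "pos t \<longleftrightarrow> (t < 2 * p \<longrightarrow> even t)" for t
  have signed: "diag_entry p m a t = (if pos t then a (idx t) else - a (idx t))" "idx t < p + m"
    if "t < 2 * p + m" for t
    using that by (auto simp: diag_entry_def idx_def pos_def)
  have "idx s = idx t \<and> (pos s \<longleftrightarrow> pos t)"
    using eq signed[OF st(1)] signed[OF st(2)] admissible_eq_iff[OF adm, of "idx s" "idx t"]
      admissible_neq_neg[OF adm, of "idx s" "idx t"] admissible_neq_neg[OF adm, of "idx t" "idx s"]
    by (auto split: if_splits)
  then have idx_eq: "idx s = idx t" and pos_eq: "pos s \<longleftrightarrow> pos t" by auto
  have half: "u div 2 < p" if "u < 2 * p" for u using that by (simp add: div_less_iff_less_mult)
  show "s = t"
  proof (cases "s < 2 * p"; cases "t < 2 * p")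
    assume "s < 2 * p" "t < 2 * p"
    then have "s div 2 = t div 2" "even s \<longleftrightarrow> even t"
      using idx_eq pos_eq by (simp_all add: idx_def pos_def)
    then show "s = t" by (metis even_two_times_div_two odd_two_times_div_two_succ)
  qed (use idx_eq half in \<open>auto simp: idx_def\<close>)
qed

lemma power_odd_eq_mult_square: "x ^ (2 * k + 1) = x * (x ^ 2) ^ k"
  for x :: "'a::monoid_mult"
  by (simp add: power_mult[symmetric] power_commutes)

lemma power_even_eq_mult_square: "x ^ (2 * k + 2) = x ^ 2 * (x ^ 2) ^ k"
  for x :: "'a::monoid_mult"
  by (simp add: power_mult[symmetric] power_add[symmetric] add.commute)

lemma diag_entry_kernel: "diag_entry p m a (2 * p + m + j) = 0"
  by (simp add: diag_entry_def)

context
  fixes p m r :: nat and idx :: "'n::finite \<Rightarrow> nat" and B :: "'n cmat"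
  assumes bij: "bij_betw idx (UNIV :: 'n set) {..<CARD('n)}" and card: "2 * p + m + r = CARD('n)"
begin

lemma trace_odd_pow_fst_diag:
  "trace_odd_pow_fst k (diagonal (\<lambda>i. diag_entry p m a (idx i)), B) =
    (\<Sum>j<m. a (p + j) * (a (p + j) ^ 2) ^ k)"
proof -
  have "trace_odd_pow_fst k (diagonal (\<lambda>i. diag_entry p m a (idx i)), B) =
      (\<Sum>i\<in>UNIV. diag_entry p m a (idx i) ^ (2 * k + 1))"
    unfolding trace_odd_pow_fst_def fst_conv matpow_diagonal trace_diagonal ..
  also have "\<dots> = (\<Sum>j<m. a (p + j) ^ (2 * k + 1))"
    using sum_reindex_type_split[OF bij card, of "\<lambda>t. diag_entry p m a t ^ (2 * k + 1)"]
    by (simp add: diag_entry_pair diag_entry_single diag_entry_kernel power_minus_even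
        cong: sum.cong_simp)
  finally show ?thesis by (simp only: power_odd_eq_mult_square)
qed

lemma trace_pow_fst_diag:
  "trace_pow_fst k (diagonal (\<lambda>i. diag_entry p m a (idx i)), B) =
    (\<Sum>t<2 * p + m. diag_entry p m a t * diag_entry p m a t ^ k)"
proof -
  have "trace_pow_fst k (diagonal (\<lambda>i. diag_entry p m a (idx i)), B) =
      (\<Sum>t<2 * p + m + r. diag_entry p m a t ^ (k + 1))"
    unfolding trace_pow_fst_def fst_conv matpow_diagonal trace_diagonal
    using sum.reindex_bij_betw[OF bij] card by simp
  then show ?thesis by (simp add: sum_lessThan_add[of _ "2 * p + m"] diag_entry_kernel)
qed

lemma trace_sq_snd_pow_fst_diag:
  fixes a :: "nat \<Rightarrow> complex"
  assumes adm: "admissible p m a"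
    and anticomm: "(diagonal (\<lambda>i. diag_entry p m a (idx i)), B) \<in> anticomm_pairs"
  defines "\<beta> t \<equiv> (B ** B) $ inv_into UNIV idx t $ inv_into UNIV idx t"
  shows "trace_sq_snd_pow_fst k (diagonal (\<lambda>i. diag_entry p m a (idx i)), B) =
    (\<Sum>q<p. ((\<beta> (2 * q) + \<beta> (2 * q + 1)) * a q ^ 2) * (a q ^ 2) ^ k)"
proof -
  let ?e = "diag_entry p m a"
  have inv_idx: "inv_into UNIV idx (idx i) = i" for i
    using bij by (simp add: bij_betw_def)
  have single: "\<beta> (2 * p + j) = 0" if "j < m" for j
  proof -
    define i where "i = inv_into UNIV idx (2 * p + j)"
    have "idx i = 2 * p + j"
      unfolding i_def using bij that card by (intro f_inv_into_f) (auto simp: bij_betw_def)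
    then have "B $ i $ l = 0" for l
      using anticomm[unfolded anticomm_pairs_diagonal_iff, rule_format, of i l]
        diag_entry_neq_neg_single[OF adm that, of "idx l"] that
      by (auto simp: diag_entry_single add_eq_0_iff)
    then show ?thesis by (simp add: \<beta>_def i_def[symmetric] matrix_matrix_mult_def)
  qed
  have "trace_sq_snd_pow_fst k (diagonal (\<lambda>i. ?e (idx i)), B) =
      (\<Sum>i\<in>UNIV. \<beta> (idx i) * ?e (idx i) ^ (2 * k + 2))"
    unfolding trace_sq_snd_pow_fst_def fst_conv snd_conv matpow_diagonal trace_mult_diagonal
    by (simp add: \<beta>_def inv_idx)
  also have "\<dots> = (\<Sum>q<p. \<beta> (2 * q) * a q ^ (2 * k + 2) + \<beta> (2 * q + 1) * a q ^ (2 * k + 2))"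
    using sum_reindex_type_split[OF bij card, of "\<lambda>t. \<beta> t * ?e t ^ (2 * k + 2)"]
    by (simp add: diag_entry_pair single diag_entry_kernel power_minus_even sum.distrib
        cong: sum.cong_simp)
  also have "\<dots> = (\<Sum>q<p. ((\<beta> (2 * q) + \<beta> (2 * q + 1)) * a q ^ 2) * (a q ^ 2) ^ k)"
    by (simp only: power_even_eq_mult_square distrib_right mult.assoc)
  finally show ?thesis .
qed

end

lemma sum_of_geometric_trace_odd_pow_fst:
  fixes A B :: "'n::finite cmat"
  assumes "A \<in> type_diag p m r"
  shows "sum_of_geometric m (\<lambda>k. trace_odd_pow_fst k (A, B))"
proof -
  obtain idx a where "bij_betw idx (UNIV :: 'n set) {..<CARD('n)}" "2 * p + m + r = CARD('n)"
    "A = diagonal (\<lambda>i. diag_entry p m a (idx i))"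
    using type_diagE[OF assms] by blast
  then show ?thesis
    unfolding sum_of_geometric_def
    by (intro exI[of _ "\<lambda>j. a (p + j)"] exI[of _ "\<lambda>j. a (p + j) ^ 2"])
      (simp add: trace_odd_pow_fst_diag)
qed

lemma sum_of_geometric_trace_pow_fst:
  fixes A B :: "'n::finite cmat"
  assumes "A \<in> type_diag p m r"
  shows "sum_of_geometric (2 * p + m) (\<lambda>k. trace_pow_fst k (A, B))"
proof -
  obtain idx a where "bij_betw idx (UNIV :: 'n set) {..<CARD('n)}" "2 * p + m + r = CARD('n)"
    "A = diagonal (\<lambda>i. diag_entry p m a (idx i))"
    using type_diagE[OF assms] by blast
  then show ?thesis
    unfolding sum_of_geometric_def
    by (intro exI[of _ "diag_entry p m a"] exI[of _ "diag_entry p m a"])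
      (simp add: trace_pow_fst_diag)
qed

lemma sum_of_geometric_trace_sq_snd_pow_fst:
  fixes A B :: "'n::finite cmat"
  assumes "(A, B) \<in> anticomm_pairs" "A \<in> type_diag p m r"
  shows "sum_of_geometric p (\<lambda>k. trace_sq_snd_pow_fst k (A, B))"
proof -
  obtain idx a where "bij_betw idx (UNIV :: 'n set) {..<CARD('n)}" "2 * p + m + r = CARD('n)"
    "admissible p m a" "A = diagonal (\<lambda>i. diag_entry p m a (idx i))"
    using type_diagE[OF assms(2)] by blast
  moreover define \<beta> where "\<beta> t = (B ** B) $ inv_into UNIV idx t $ inv_into UNIV idx t" for t
  ultimately show ?thesis
    using assms(1) unfolding sum_of_geometric_def
    by (intro exI[of _ "\<lambda>q. (\<beta> (2 * q) + \<beta> (2 * q + 1)) * a q ^ 2"] exI[of _ "\<lambda>q. a q ^ 2"])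
      (simp add: trace_sq_snd_pow_fst_diag \<beta>_def)
qed

lemma sum_of_geometric_trace_odd_pow_snd:
  fixes A B :: "'n::finite cmat"
  assumes "(A, B) \<in> anticomm_pairs" "A \<in> type_diag p m r"
  shows "sum_of_geometric r (\<lambda>k. trace_odd_pow_snd k (A, B))"
proof -
  obtain idx a where idx: "bij_betw idx (UNIV :: 'n set) {..<CARD('n)}"
    and card: "2 * p + m + r = CARD('n)" and adm: "admissible p m a"
    and A: "A = diagonal (\<lambda>i. diag_entry p m a (idx i))"
    using type_diagE[OF assms(2)] by blast
  define d where "d = (\<lambda>i. diag_entry p m a (idx i))"
  define S where "S = {i. d i = 0}"
  have "idx ` S \<subseteq> {2 * p + m..<CARD('n)}"
    using idx diag_entry_eq_0_iff[OF adm] by (auto simp: S_def d_def bij_betw_def)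
  moreover have "inj_on idx S" using idx by (auto simp: bij_betw_def inj_on_def)
  ultimately have "card S \<le> r"
    using card_inj_on_le[of idx S "{2 * p + m..<CARD('n)}"] card by simp
  have "\<forall>i j. kernel_block d B $ i $ j \<noteq> 0 \<longrightarrow> i \<in> S \<and> j \<in> S"
    by (simp add: kernel_block_def S_def)
  then obtain ev where ev: "\<forall>k>0. trace (matpow (kernel_block d B) k) = (\<Sum>l<card S. ev l ^ k)"
    by (blast dest: trace_matpow_supported)
  have anticomm: "(diagonal d, B) \<in> anticomm_pairs" using assms(1) A d_def by simp
  have power_sum: "trace_odd_pow_snd k (A, B) = (\<Sum>l<card S. ev l * (ev l ^ 2) ^ k)" for k
  proof -
    have "trace_odd_pow_snd k (A, B) = trace (matpow (kernel_block d B) (2 * k + 1))"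
      unfolding trace_odd_pow_snd_def snd_conv by (rule trace_odd_matpow_kernel_block[OF anticomm])
    also have "\<dots> = (\<Sum>l<card S. ev l ^ (2 * k + 1))" by (rule ev[rule_format]) simp
    finally show ?thesis by (simp only: power_odd_eq_mult_square)
  qed
  have "sum_of_geometric (card S) (\<lambda>k. trace_odd_pow_snd k (A, B))"
    unfolding sum_of_geometric_def
    by (intro exI[of _ ev] exI[of _ "\<lambda>l. ev l ^ 2"] allI) (rule power_sum)
  then show ?thesis using \<open>card S \<le> r\<close> by (rule sum_of_geometric_mono)
qed

section \<open>A point of Z_{p,m,r} on which the invariants are long sums\<close>

definition standard_params :: "nat \<Rightarrow> complex" where
  "standard_params t = of_nat (t + 1)"

lemma standard_params_neq_0: "standard_params t \<noteq> 0"
  unfolding standard_params_def by (simp only: of_nat_eq_0_iff)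

lemma standard_params_square_eq_iff: "standard_params s ^ 2 = standard_params t ^ 2 \<longleftrightarrow> s = t"
  unfolding standard_params_def
  by (metis Suc_eq_plus1 nat.inject of_nat_eq_iff of_nat_power power2_eq_iff_nonneg zero_le)

lemma admissible_standard_params: "admissible p m standard_params"
proof -
  have "(of_nat (i + 1) :: complex) \<noteq> 0" for i by (simp only: of_nat_eq_0_iff)
  moreover have "(of_nat (i + 1) :: complex) = of_nat (j + 1) \<longleftrightarrow> i = j" for i j
    by (simp only: of_nat_eq_iff) simp
  moreover have "(of_nat (i + 1) :: complex) \<noteq> - of_nat (j + 1)" for i j
  proof
    assume "(of_nat (i + 1) :: complex) = - of_nat (j + 1)"
    then have "(of_nat (i + 1 + (j + 1)) :: complex) = 0" by (simp only: of_nat_add) simp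
    then show False by (simp only: of_nat_eq_0_iff)
  qed
  ultimately show ?thesis unfolding admissible_def standard_params_def by blast
qed

definition partner :: "nat \<Rightarrow> nat" where
  "partner t = (if even t then t + 1 else t - 1)"

lemma partner_lt: "t < 2 * p \<Longrightarrow> partner t < 2 * p"
  by (auto simp: partner_def elim!: evenE)

lemma partner_partner: "partner (partner t) = t"
  by (auto simp: partner_def elim!: oddE)

lemma diag_entry_partner: "t < 2 * p \<Longrightarrow> diag_entry p m a (partner t) = - diag_entry p m a t"
  using partner_lt[of t p] by (auto simp: partner_def diag_entry_def elim!: oddE)

locale type_witness =
  fixes p m r :: nat and idx :: "'n::finite \<Rightarrow> nat"
  assumes bij: "bij_betw idx (UNIV :: 'n set) {..<CARD('n)}" and card: "2 * p + m + r = CARD('n)"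
begin

definition witness_A :: "'n cmat" where
  "witness_A = diagonal (\<lambda>i. diag_entry p m standard_params (idx i))"

text \<open>Swapping the eigenvectors of each pair +-a_q of A makes B^2 the identity on them; on ker A,
  B has distinct nonzero eigenvalues.\<close>

definition witness_B :: "'n cmat" where
  "witness_B = (\<chi> i j. if idx i < 2 * p \<and> idx j = partner (idx i) then 1
      else if i = j \<and> 2 * p + m \<le> idx i then standard_params (idx i) else 0)"

lemma witness_anticomm: "(witness_A, witness_B) \<in> anticomm_pairs"
  using diag_entry_partner diag_entry_eq_0_iff[OF admissible_standard_params]
  by (auto simp: witness_A_def witness_B_def anticomm_pairs_diagonal_iff)

lemma witness_mem_Zpmr: "(witness_A, witness_B) \<in> Zpmr p m r"
  using witness_anticomm type_diagI[OF bij card admissible_standard_params]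
  by (simp add: mem_Zpmr witness_A_def)

lemma witness_trace_odd_pow_fst:
  "trace_odd_pow_fst k (witness_A, witness_B) =
    (\<Sum>j<m. standard_params (p + j) * (standard_params (p + j) ^ 2) ^ k)"
  unfolding witness_A_def by (rule trace_odd_pow_fst_diag[OF bij card])

lemma witness_trace_pow_fst:
  "trace_pow_fst k (witness_A, witness_B) =
    (\<Sum>t<2 * p + m. diag_entry p m standard_params t * diag_entry p m standard_params t ^ k)"
  unfolding witness_A_def by (rule trace_pow_fst_diag[OF bij card])

lemma witness_B_square_pair:
  "(witness_B ** witness_B) $ inv_into UNIV idx t $ inv_into UNIV idx t = 1" if "t < 2 * p"
proof -
  define i where "i = inv_into UNIV idx t"
  have "idx i = t"
    unfolding i_def using bij that card by (intro f_inv_into_f) (auto simp: bij_betw_def)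
  then have "witness_B $ i $ l * witness_B $ l $ i = (if idx l = partner t then 1 else 0)" for l
    using that partner_lt[OF that] partner_partner[of t] by (auto simp: witness_B_def)
  then have "(witness_B ** witness_B) $ i $ i = (\<Sum>l\<in>UNIV. if idx l = partner t then 1 else 0)"
    by (simp add: matrix_matrix_mult_def)
  also have "\<dots> = (\<Sum>s<CARD('n). if s = partner t then 1 else 0)"
    by (rule sum.reindex_bij_betw[OF bij])
  also have "\<dots> = 1" using partner_lt[OF that] card by simp
  finally show ?thesis by (simp add: i_def)
qed

lemma witness_trace_sq_snd_pow_fst:
  "trace_sq_snd_pow_fst k (witness_A, witness_B) =
    (\<Sum>q<p. (2 * standard_params q ^ 2) * (standard_params q ^ 2) ^ k)"
  using witness_anticomm unfolding witness_A_def
  by (simp add: trace_sq_snd_pow_fst_diag[OF bij card admissible_standard_params]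
      witness_B_square_pair cong: sum.cong_simp)

lemma witness_kernel_block:
  "kernel_block (\<lambda>i. diag_entry p m standard_params (idx i)) witness_B =
    diagonal (\<lambda>i. if 2 * p + m \<le> idx i then standard_params (idx i) else 0)"
  by (auto simp: kernel_block_def witness_B_def diagonal_def Finite_Cartesian_Product.vec_eq_iff
      diag_entry_eq_0_iff[OF admissible_standard_params])

lemma witness_trace_odd_pow_snd:
  "trace_odd_pow_snd k (witness_A, witness_B) =
    (\<Sum>j<r. standard_params (2 * p + m + j) * (standard_params (2 * p + m + j) ^ 2) ^ k)"
proof -
  let ?g = "\<lambda>t. (if 2 * p + m \<le> t then standard_params t else 0) ^ (2 * k + 1)"
  have "trace_odd_pow_snd k (witness_A, witness_B) = (\<Sum>i\<in>UNIV. ?g (idx i))"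
    using trace_odd_matpow_kernel_block[OF witness_anticomm[unfolded witness_A_def]]
    unfolding trace_odd_pow_snd_def snd_conv witness_kernel_block matpow_diagonal trace_diagonal
    by (simp add: if_distrib)
  also have "\<dots> = (\<Sum>j<r. standard_params (2 * p + m + j) ^ (2 * k + 1))"
    using sum_reindex_type_split[OF bij card, of ?g] by (simp cong: sum.cong_simp)
  finally show ?thesis by (simp only: power_odd_eq_mult_square)
qed

end

lemma Zpmr_not_subset:
  assumes "(p, m, r) \<in> TP CARD('n::finite)" "(p', m', r') \<in> TP CARD('n)" "(p, m, r) \<noteq> (p', m', r')"
  shows "\<not> (Zpmr p m r :: ('n cmat \<times> 'n cmat) set) \<subseteq> Zpmr p' m' r'"
proof -
  have dims: "2 * p + m + r = CARD('n)" "2 * p' + m' + r' = CARD('n)"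
    using assms(1,2) by (simp_all add: TP_def)
  obtain idx :: "'n \<Rightarrow> nat" where "bij_betw idx UNIV {..<CARD('n)}"
    using ex_bij_betw_finite_nat[of "UNIV :: 'n set"] by (auto simp: atLeast0LessThan)
  then interpret type_witness p m r idx using dims(1) by unfold_locales
  have "2 * p + m + r = 2 * p' + m' + r'" using dims by linarith
  then have "m' < m \<or> 2 * p' + m' < 2 * p + m \<or> p' < p \<or> r' < r"
    using assms(3) by auto
  then show ?thesis
  proof (elim disjE)
    assume "m' < m"
    show ?thesis
      by (rule Zpmr_not_subset_by_hankel[OF trace_invariants_poly_fun(1)
            trace_invariants_conj_invariant(1) sum_of_geometric_trace_odd_pow_fst \<open>m' < m\<close>
            witness_mem_Zpmr])
        (auto simp: witness_trace_odd_pow_fst inj_on_def standard_params_square_eq_iff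
          standard_params_neq_0)
  next
    assume "2 * p' + m' < 2 * p + m"
    show ?thesis
      by (rule Zpmr_not_subset_by_hankel[OF trace_invariants_poly_fun(2)
            trace_invariants_conj_invariant(2) sum_of_geometric_trace_pow_fst
            \<open>2 * p' + m' < 2 * p + m\<close> witness_mem_Zpmr])
        (auto simp: witness_trace_pow_fst inj_on_diag_entry admissible_standard_params
          diag_entry_eq_0_iff)
  next
    assume "p' < p"
    show ?thesis
      by (rule Zpmr_not_subset_by_hankel[OF trace_invariants_poly_fun(3)
            trace_invariants_conj_invariant(3) sum_of_geometric_trace_sq_snd_pow_fst \<open>p' < p\<close>
            witness_mem_Zpmr])
        (auto simp: witness_trace_sq_snd_pow_fst inj_on_def standard_params_square_eq_iff
          standard_params_neq_0)
  next
    assume "r' < r"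
    show ?thesis
      by (rule Zpmr_not_subset_by_hankel[OF trace_invariants_poly_fun(4)
            trace_invariants_conj_invariant(4) sum_of_geometric_trace_odd_pow_snd \<open>r' < r\<close>
            witness_mem_Zpmr])
        (auto simp: witness_trace_odd_pow_snd inj_on_def standard_params_square_eq_iff
          standard_params_neq_0)
  qed
qed

theorem proposition5p5:
  fixes p m r p' m' r' :: nat
  assumes "(p, m, r) \<in> TP CARD('n::finite)"
    and "(p', m', r') \<in> TP CARD('n)"
    and "(p, m, r) \<noteq> (p', m', r')"
  shows "\<not> ((Zpmr p m r :: ('n cmat \<times> 'n cmat) set) \<subseteq> Zpmr p' m' r')
       \<and> \<not> ((Zpmr p' m' r' :: ('n cmat \<times> 'n cmat) set) \<subseteq> Zpmr p m r)"
  using Zpmr_not_subset[OF assms(1,2,3)] Zpmr_not_subset[OF assms(2,1)] assms(3) by auto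

end
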